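(* Let $T$ be an MFQST under either the explicit bound or the node-weighted strategy. Let $x$ be any node of $T$, let $u$ be any in-neighbour of $x$ and let $y$ be the out-neighbour of $x$, with $u\ne x\ne y$. Then the angle $\angle uxy$ is at least $90^\circ$.
   Context: Let $Z=\{z_1,\dots,z_n\}\subset\mathbb{R}^2$ ($n\ge 1$) be a set of sources and $z_{BS}\in\mathbb{R}^2\setminus Z$ a sink; each source has supply $1$. A flow-dependent quadratic Steiner tree (FQST) consists of a finite set $S\subset\mathbb{R}^2$ of Steiner points and a tree $T$ with vertex set $Z\cup S\cup\{z_{BS}\}$ whose edges are directed towards $z_{BS}$. Every node other than the sink has exactly one out-edge, and the sink has none. Each edge $e$ carries a positive flow $f(e)$ such that: - at each source, the flow on its out-edge minus the total flow on its in-edges equals $1$; - at each Steiner point, the out-flow equals the total in-flow; - the sink receives total flow $n$. The cost is $L(T)=\sum_{e\in E(T)} f(e)|e|^2$. In-neighbours of a node are the tails of its in-edges; its out-neighbour is the head of its out-edge. MFQSTs under the two strategies: - Explicit bound $k$: an MFQST minimises $L$ among FQSTs with $|S|\le k$. - Node-weighted with cost $c>0$: an MFQST minimises $L_c(T)=L(T)+c|S|$ over all FQSTs. No degree restrictions are imposed in either case. *)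

theory Defs
  imports "HOL-Analysis.Analysis"
begin

type_synonym pt = "real ^ 2"

definition vangle :: "pt \<Rightarrow> pt \<Rightarrow> real" where
  "vangle u v = (if u = 0 \<or> v = 0 then pi / 2 else arccos ((u \<bullet> v) / (norm u * norm v)))"

definition angle :: "pt \<Rightarrow> pt \<Rightarrow> pt \<Rightarrow> real" where
  "angle a b c = vangle (a - b) (c - b)"

definition fq_nodes :: "pt set \<Rightarrow> pt \<Rightarrow> pt set \<Rightarrow> pt set" where
  "fq_nodes Z zBS S = Z \<union> S \<union> {zBS}"

text \<open>The directed tree is encoded by the out-neighbour
  function par (each non-sink node v has the unique out-edge (v, par v)), and
  the flow on that out-edge is f v.  The tree condition: every node reaches the
  sink by following out-edges (this forces connectedness and acyclicity).\<close>
definition FQST :: "pt set \<Rightarrow> pt \<Rightarrow> pt set \<Rightarrow> (pt \<Rightarrow> pt) \<Rightarrow> (pt \<Rightarrow> real) \<Rightarrow> bool" where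
  "FQST Z zBS S par f \<longleftrightarrow>
     (let V = fq_nodes Z zBS S in
       finite S \<and> S \<inter> (Z \<union> {zBS}) = {} \<and>
       (\<forall>v \<in> V - {zBS}. par v \<in> V \<and> par v \<noteq> v) \<and>
       (\<forall>v \<in> V. \<exists>k. (par ^^ k) v = zBS) \<and>
       (\<forall>v \<in> V - {zBS}. f v > 0) \<and>
       (\<forall>z \<in> Z. f z - (\<Sum>w \<in> {w \<in> V - {zBS}. par w = z}. f w) = 1) \<and>
       (\<forall>s \<in> S. f s = (\<Sum>w \<in> {w \<in> V - {zBS}. par w = s}. f w)) \<and>
       (\<Sum>w \<in> {w \<in> V - {zBS}. par w = zBS}. f w) = real (card Z))"

definition fq_cost :: "pt set \<Rightarrow> pt \<Rightarrow> pt set \<Rightarrow> (pt \<Rightarrow> pt) \<Rightarrow> (pt \<Rightarrow> real) \<Rightarrow> real" where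
  "fq_cost Z zBS S par f = (\<Sum>v \<in> fq_nodes Z zBS S - {zBS}. f v * (norm (v - par v))\<^sup>2)"

definition MFQST_bound :: "nat \<Rightarrow> pt set \<Rightarrow> pt \<Rightarrow> pt set \<Rightarrow> (pt \<Rightarrow> pt) \<Rightarrow> (pt \<Rightarrow> real) \<Rightarrow> bool" where
  "MFQST_bound k Z zBS S par f \<longleftrightarrow>
     FQST Z zBS S par f \<and> card S \<le> k \<and>
     (\<forall>S' par' f'. FQST Z zBS S' par' f' \<and> card S' \<le> k \<longrightarrow>
        fq_cost Z zBS S par f \<le> fq_cost Z zBS S' par' f')"

definition MFQST_nw :: "real \<Rightarrow> pt set \<Rightarrow> pt \<Rightarrow> pt set \<Rightarrow> (pt \<Rightarrow> pt) \<Rightarrow> (pt \<Rightarrow> real) \<Rightarrow> bool" where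
  "MFQST_nw c Z zBS S par f \<longleftrightarrow>
     FQST Z zBS S par f \<and>
     (\<forall>S' par' f'. FQST Z zBS S' par' f' \<longrightarrow>
        fq_cost Z zBS S par f + c * real (card S) \<le> fq_cost Z zBS S' par' f' + c * real (card S'))"

end

theory Submission
  imports Defs
begin

(* Let u -> x -> y be two consecutive edges of an FQST and d = (u - x) \<bullet> (y - x).
   If d > 0, reroute u directly to y: the flow f u that used to travel u -> x -> y
   now travels u -> y, so the flow on the edge x -> y drops by f u.  By the law of
   cosines the cost changes by f u * (|u - y|^2 - |u - x|^2 - |x - y|^2) = -2 * f u * d < 0.
   Flow conservation gives f u <= f x; if f u < f x the rerouted tree is again an
   FQST on the same Steiner points, and if f u = f x then x is a Steiner point whose
   only in-neighbour is u, so x carries no flow any more and can be deleted.  Either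
   way we obtain a strictly cheaper FQST with at most as many Steiner points,
   contradicting minimality under both strategies. *)

definition inflow :: "'a set \<Rightarrow> ('a \<Rightarrow> 'a) \<Rightarrow> ('a \<Rightarrow> real) \<Rightarrow> 'a \<Rightarrow> real" where
  "inflow A p g z = (\<Sum>w \<in> {w \<in> A. p w = z}. g w)"

definition edge_cost :: "'a::real_normed_vector set \<Rightarrow> ('a \<Rightarrow> 'a) \<Rightarrow> ('a \<Rightarrow> real) \<Rightarrow> real" where
  "edge_cost A p g = (\<Sum>v \<in> A. g v * (norm (v - p v))\<^sup>2)"

lemma FQST_iff:
  "FQST Z zBS S par f \<longleftrightarrow>
     (let V = fq_nodes Z zBS S in
       finite S \<and> S \<inter> (Z \<union> {zBS}) = {} \<and>
       (\<forall>v \<in> V - {zBS}. par v \<in> V \<and> par v \<noteq> v) \<and>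
       (\<forall>v \<in> V. \<exists>k. (par ^^ k) v = zBS) \<and>
       (\<forall>v \<in> V - {zBS}. f v > 0) \<and>
       (\<forall>z \<in> Z. f z - inflow (V - {zBS}) par f z = 1) \<and>
       (\<forall>s \<in> S. f s = inflow (V - {zBS}) par f s) \<and>
       inflow (V - {zBS}) par f zBS = real (card Z))"
  unfolding FQST_def inflow_def ..

lemma fq_cost_eq_edge_cost:
  "fq_cost Z zBS S par f = edge_cost (fq_nodes Z zBS S - {zBS}) par f"
  unfolding fq_cost_def edge_cost_def ..

lemma sum_change_at_two:
  fixes g h :: "'a \<Rightarrow> real"
  assumes "finite A" "u \<in> A" "x \<in> A" "u \<noteq> x" "\<forall>w \<in> A - {u, x}. g w = h w"
  shows "sum g A = sum h A + (g u - h u) + (g x - h x)"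
proof -
  have "sum g A = g u + (g x + sum g (A - {u} - {x}))"
    using assms(1-4) by (simp add: sum.remove)
  moreover have "sum h A = h u + (h x + sum h (A - {u} - {x}))"
    using assms(1-4) by (simp add: sum.remove)
  moreover have "sum g (A - {u} - {x}) = sum h (A - {u} - {x})"
    using assms(5) by (intro sum.cong) auto
  ultimately show ?thesis by linarith
qed

lemma inflow_reroute:
  assumes "finite A" "u \<in> A" "x \<in> A" "u \<noteq> x" "p u = x"
  shows "inflow A (p(u := p x)) (g(x := g x - g u)) z = inflow A p g z - (if z = x then g u else 0)"
proof -
  let ?p' = "p(u := p x)" and ?g' = "g(x := g x - g u)"
  have "inflow A ?p' ?g' z = (\<Sum>w \<in> A. if ?p' w = z then ?g' w else 0)"
    unfolding inflow_def using assms(1) by (rule sum.inter_filter)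
  also have "\<dots> = (\<Sum>w \<in> A. if p w = z then g w else 0)
      + ((if ?p' u = z then ?g' u else 0) - (if p u = z then g u else 0))
      + ((if ?p' x = z then ?g' x else 0) - (if p x = z then g x else 0))"
    using assms(1-4) by (intro sum_change_at_two) auto
  also have "\<dots> = (\<Sum>w \<in> A. if p w = z then g w else 0) - (if z = x then g u else 0)"
    using assms(4,5) by auto
  also have "(\<Sum>w \<in> A. if p w = z then g w else 0) = inflow A p g z"
    unfolding inflow_def using assms(1) by (rule sum.inter_filter[symmetric])
  finally show ?thesis .
qed

lemma norm_diff_law_of_cosines:
  fixes u x y :: "'a::real_inner"
  shows "(norm (u - y))\<^sup>2 = (norm (u - x))\<^sup>2 + (norm (x - y))\<^sup>2 - 2 * ((u - x) \<bullet> (y - x))"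
  using dot_norm_neg[of "u - x" "y - x"] by (simp add: norm_minus_commute)

lemma edge_cost_reroute:
  fixes p :: "'a::real_inner \<Rightarrow> 'a"
  assumes "finite A" "u \<in> A" "x \<in> A" "u \<noteq> x" "p u = x"
  shows "edge_cost A (p(u := p x)) (g(x := g x - g u))
           = edge_cost A p g - 2 * g u * ((u - x) \<bullet> (p x - x))"
proof -
  let ?p' = "p(u := p x)" and ?g' = "g(x := g x - g u)"
  have "edge_cost A ?p' ?g' = edge_cost A p g
      + (?g' u * (norm (u - ?p' u))\<^sup>2 - g u * (norm (u - p u))\<^sup>2)
      + (?g' x * (norm (x - ?p' x))\<^sup>2 - g x * (norm (x - p x))\<^sup>2)"
    unfolding edge_cost_def using assms(1-4) by (intro sum_change_at_two) auto
  also have "\<dots> = edge_cost A p g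
      + g u * ((norm (u - p x))\<^sup>2 - (norm (u - x))\<^sup>2 - (norm (x - p x))\<^sup>2)"
    using assms(4,5) by (simp add: algebra_simps)
  also have "\<dots> = edge_cost A p g - 2 * g u * ((u - x) \<bullet> (p x - x))"
  proof -
    have cosines: "(norm (u - p x))\<^sup>2 - (norm (u - x))\<^sup>2 - (norm (x - p x))\<^sup>2
        = - 2 * ((u - x) \<bullet> (p x - x))"
      using norm_diff_law_of_cosines[of u "p x" x] by linarith
    show ?thesis by (simp only: cosines)
  qed
  finally show ?thesis .
qed

lemma inflow_remove_null:
  assumes "finite A" "g x = 0"
  shows "inflow (A - {x}) p g z = inflow A p g z"
  unfolding inflow_def using assms by (intro sum.mono_neutral_left) auto

lemma edge_cost_remove_null:
  assumes "finite A" "g x = 0"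
  shows "edge_cost (A - {x}) p g = edge_cost A p g"
  unfolding edge_cost_def using assms by (intro sum.mono_neutral_left) auto

lemma shortcut_preserves_reach:
  fixes par :: "'a \<Rightarrow> 'a"
  assumes closed: "\<forall>v \<in> V - {z}. par v \<in> V" and reach: "\<forall>v \<in> V. \<exists>k. (par ^^ k) v = z"
    and u: "u \<in> V" "u \<noteq> z" "par u \<noteq> z"
  shows "\<forall>v \<in> V. \<exists>k. ((par(u := par (par u))) ^^ k) v = z"
proof -
  define p where "p = par(u := par (par u))"
  have "\<exists>k. (p ^^ k) v = z" if "v \<in> V" "(par ^^ n) v = z" for n v
    using that
  proof (induction n arbitrary: v rule: less_induct)
    case (less n)
    show ?case
    proof (cases "v = z")
      case True
      then show ?thesis by (metis funpow_0)
    next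
      case False
      then obtain m where n: "n = Suc m" using less.prems by (cases n) auto
      have pv: "par v \<in> V" using closed less.prems False by auto
      have m: "(par ^^ m) (par v) = z"
        using less.prems n by (simp add: funpow_Suc_right del: funpow.simps)
      show ?thesis
      proof (cases "v = u")
        case False
        obtain k where "(p ^^ k) (par v) = z" using less.IH[of m "par v"] n pv m by auto
        then have "(p ^^ Suc k) v = z"
          using False by (simp add: p_def funpow_Suc_right del: funpow.simps)
        then show ?thesis by blast
      next
        case True
        obtain j where mj: "m = Suc j" using m True u(3) by (cases m) auto
        have ppv: "par (par v) \<in> V" using closed pv True u by auto
        have j: "(par ^^ j) (par (par v)) = z"
          using m mj by (simp add: funpow_Suc_right del: funpow.simps)
        obtain k where "(p ^^ k) (par (par v)) = z"
          using less.IH[of j "par (par v)"] n mj ppv j by auto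
        then have "(p ^^ Suc k) v = z"
          using True by (simp add: p_def funpow_Suc_right del: funpow.simps)
        then show ?thesis by blast
      qed
    qed
  qed
  then show ?thesis using reach unfolding p_def by blast
qed

lemma no_two_cycle:
  assumes "par u = x" "par x = u" "u \<noteq> z" "x \<noteq> z" "(par ^^ k) u = z"
  shows False
proof -
  have "(par ^^ n) u \<in> {u, x}" for n
    by (induction n) (use assms in auto)
  then show False using assms by (metis insertE singletonD)
qed

section \<open>Rerouting an edge of an FQST\<close>

lemma FQST_reroute_basics:
  assumes F: "FQST Z zBS S par f" and finZ: "finite Z"
    and x: "x \<in> fq_nodes Z zBS S" "x \<noteq> zBS"
    and u: "u \<in> fq_nodes Z zBS S - {zBS}" "par u = x"
  defines "V \<equiv> fq_nodes Z zBS S"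
  shows "finite V" "u \<noteq> x" "par x \<in> V" "par x \<noteq> x" "par x \<noteq> u"
    and "\<forall>v \<in> V. \<exists>k. ((par(u := par x)) ^^ k) v = zBS"
proof -
  have closed: "\<forall>v \<in> V - {zBS}. par v \<in> V \<and> par v \<noteq> v"
    and reach: "\<forall>v \<in> V. \<exists>k. (par ^^ k) v = zBS" and finS: "finite S"
    using F unfolding FQST_def Let_def V_def by auto
  show "finite V" using finS finZ unfolding V_def fq_nodes_def by auto
  have "par u \<noteq> u" using closed u(1) unfolding V_def by blast
  then show "u \<noteq> x" using u(2) by simp
  show "par x \<in> V" "par x \<noteq> x" using closed x unfolding V_def by auto
  show "par x \<noteq> u"
  proof
    assume "par x = u"
    obtain k where "(par ^^ k) u = zBS" using reach u unfolding V_def by auto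
    then show False using no_two_cycle[OF u(2) \<open>par x = u\<close>] u x(2) by blast
  qed
  show "\<forall>v \<in> V. \<exists>k. ((par(u := par x)) ^^ k) v = zBS"
    using shortcut_preserves_reach[of V zBS par u] closed reach u x(2)
    unfolding V_def by auto
qed

lemma FQST_in_edge_flow:
  assumes F: "FQST Z zBS S par f" and "finite Z"
    and x: "x \<in> fq_nodes Z zBS S" "x \<noteq> zBS"
    and u: "u \<in> fq_nodes Z zBS S - {zBS}" "par u = x"
  defines "V \<equiv> fq_nodes Z zBS S"
  shows "f u < f x \<or> (x \<in> S \<and> {w \<in> V - {zBS}. par w = x} = {u} \<and> f x = f u)"
proof -
  define I where "I = {w \<in> V - {zBS}. par w = x}"
  have pos: "\<forall>v \<in> V - {zBS}. f v > 0"
    and src: "\<forall>z \<in> Z. f z - inflow (V - {zBS}) par f z = 1"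
    and st: "\<forall>s \<in> S. f s = inflow (V - {zBS}) par f s"
    using F unfolding FQST_iff Let_def V_def by auto
  have "finite V" using FQST_reroute_basics(1)[OF assms(1-6)] unfolding V_def .
  then have finI: "finite I" unfolding I_def by auto
  have uI: "u \<in> I" using u unfolding I_def V_def by auto
  have split: "inflow (V - {zBS}) par f x = f u + sum f (I - {u})"
    unfolding inflow_def I_def[symmetric] using finI uI by (simp add: sum.remove)
  have rest_nonneg: "sum f (I - {u}) \<ge> 0"
    using pos unfolding I_def by (intro sum_nonneg less_imp_le) auto
  have flow_x: "f x = inflow (V - {zBS}) par f x + (if x \<in> Z then 1 else 0)"
  proof (cases "x \<in> Z")
    case True
    then show ?thesis using src by fastforce
  next
    case False
    then have "x \<in> S" using x unfolding fq_nodes_def by auto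
    then show ?thesis using st False by auto
  qed
  show ?thesis
  proof (cases "x \<in> Z \<or> I \<noteq> {u}")
    case True
    moreover have "I \<noteq> {u} \<Longrightarrow> sum f (I - {u}) > 0"
      using finI uI pos unfolding I_def by (intro sum_pos) auto
    ultimately have "f u < f x" using flow_x split rest_nonneg by (auto split: if_splits)
    then show ?thesis ..
  next
    case False
    then have "x \<in> S" using x unfolding fq_nodes_def by auto
    moreover have "f x = f u" using False flow_x split by simp
    ultimately show ?thesis using False unfolding I_def by blast
  qed
qed

lemma FQST_reroute:
  assumes F: "FQST Z zBS S par f" and "finite Z"
    and x: "x \<in> fq_nodes Z zBS S" "x \<noteq> zBS"
    and u: "u \<in> fq_nodes Z zBS S - {zBS}" "par u = x"
    and less: "f u < f x"
  shows "FQST Z zBS S (par(u := par x)) (f(x := f x - f u))"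
proof -
  define V where "V = fq_nodes Z zBS S"
  note basics = FQST_reroute_basics[OF assms(1-6), folded V_def]
  have inflow': "inflow (V - {zBS}) (par(u := par x)) (f(x := f x - f u)) z
      = inflow (V - {zBS}) par f z - (if z = x then f u else 0)" for z
    using basics(1,2) x u unfolding V_def by (intro inflow_reroute) auto
  show ?thesis
    using F basics less x(2) unfolding FQST_iff Let_def V_def[symmetric] inflow'
    by (auto simp: Int_Un_distrib)
qed

lemma FQST_reroute_delete:
  assumes F: "FQST Z zBS S par f" and "finite Z"
    and x: "x \<in> fq_nodes Z zBS S" "x \<noteq> zBS"
    and u: "u \<in> fq_nodes Z zBS S - {zBS}" "par u = x"
    and xS: "x \<in> S" and only_u: "{w \<in> fq_nodes Z zBS S - {zBS}. par w = x} = {u}"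
    and eq: "f x = f u"
  shows "FQST Z zBS (S - {x}) (par(u := par x)) (f(x := f x - f u))"
proof -
  define V where "V = fq_nodes Z zBS S"
  let ?p' = "par(u := par x)"
  note basics = FQST_reroute_basics[OF assms(1-6), folded V_def]
  have closed: "\<forall>v \<in> V - {zBS}. par v \<in> V \<and> par v \<noteq> v"
    and pos: "\<forall>v \<in> V - {zBS}. f v > 0" and disj: "S \<inter> (Z \<union> {zBS}) = {}"
    and src: "\<forall>z \<in> Z. f z - inflow (V - {zBS}) par f z = 1"
    and st: "\<forall>s \<in> S. f s = inflow (V - {zBS}) par f s"
    and sink: "inflow (V - {zBS}) par f zBS = real (card Z)" and finS: "finite S"
    using F unfolding FQST_iff Let_def V_def by auto
  have f': "f(x := f x - f u) = f(x := 0)" using eq by simp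
  have V': "fq_nodes Z zBS (S - {x}) = V - {x}"
    using xS disj unfolding V_def fq_nodes_def by auto
  have inflow': "inflow (V - {x} - {zBS}) ?p' (f(x := 0)) z = inflow (V - {zBS}) par f z"
    if "z \<noteq> x" for z
  proof -
    have "V - {x} - {zBS} = (V - {zBS}) - {x}" by blast
    then have "inflow (V - {x} - {zBS}) ?p' (f(x := 0)) z = inflow (V - {zBS}) ?p' (f(x := 0)) z"
      using inflow_remove_null[of "V - {zBS}" "f(x := 0)" x] basics(1) by simp
    also have "\<dots> = inflow (V - {zBS}) par f z"
    proof -
      have "inflow (V - {zBS}) ?p' (f(x := f x - f u)) z
          = inflow (V - {zBS}) par f z - (if z = x then f u else 0)"
        using basics(1,2) x u by (intro inflow_reroute) (auto simp: V_def)
      then show ?thesis using that unfolding f' by simp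
    qed
    finally show ?thesis .
  qed
  show ?thesis
    unfolding FQST_iff Let_def V' f'
  proof (intro conjI)
    show "finite (S - {x})" "(S - {x}) \<inter> (Z \<union> {zBS}) = {}" using finS disj by auto
    show "\<forall>v \<in> V - {x} - {zBS}. ?p' v \<in> V - {x} \<and> ?p' v \<noteq> v"
      using closed basics only_u unfolding V_def by auto
    show "\<forall>v \<in> V - {x}. \<exists>k. (?p' ^^ k) v = zBS" using basics(6) by auto
    show "\<forall>v \<in> V - {x} - {zBS}. (f(x := 0)) v > 0" using pos by auto
    show "\<forall>z \<in> Z. (f(x := 0)) z - inflow (V - {x} - {zBS}) ?p' (f(x := 0)) z = 1"
      using src disj xS inflow' by auto
    show "\<forall>s \<in> S - {x}. (f(x := 0)) s = inflow (V - {x} - {zBS}) ?p' (f(x := 0)) s"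
      using st inflow' by auto
    show "inflow (V - {x} - {zBS}) ?p' (f(x := 0)) zBS = real (card Z)"
      using sink inflow' x(2) by auto
  qed
qed

lemma acute_angle_improvable:
  assumes F: "FQST Z zBS S par f" and "finite Z"
    and x: "x \<in> fq_nodes Z zBS S" "x \<noteq> zBS"
    and u: "u \<in> fq_nodes Z zBS S - {zBS}" "par u = x"
    and acute: "(u - x) \<bullet> (par x - x) > 0"
  shows "\<exists>S' par' f'. FQST Z zBS S' par' f' \<and> card S' \<le> card S \<and>
           fq_cost Z zBS S' par' f' < fq_cost Z zBS S par f"
proof -
  define V where "V = fq_nodes Z zBS S"
  let ?p' = "par(u := par x)" and ?f' = "f(x := f x - f u)"
  note basics = FQST_reroute_basics[OF assms(1-6), folded V_def]
  have "f u > 0" using F u unfolding FQST_def Let_def by auto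
  then have gain: "edge_cost (V - {zBS}) ?p' ?f' < edge_cost (V - {zBS}) par f"
    using edge_cost_reroute[of "V - {zBS}" u x par f] basics(1,2) x u acute
    unfolding V_def by auto
  consider "f u < f x" | "x \<in> S" "{w \<in> V - {zBS}. par w = x} = {u}" "f x = f u"
    using FQST_in_edge_flow[OF assms(1-6)] unfolding V_def by blast
  then show ?thesis
  proof cases
    case 1
    then have "FQST Z zBS S ?p' ?f'" using FQST_reroute[OF assms(1-6)] by blast
    moreover have "fq_cost Z zBS S ?p' ?f' < fq_cost Z zBS S par f"
      using gain unfolding fq_cost_eq_edge_cost V_def .
    ultimately show ?thesis by blast
  next
    case 2
    then have "FQST Z zBS (S - {x}) ?p' ?f'"
      using FQST_reroute_delete[OF assms(1-6)] unfolding V_def by blast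
    moreover have "fq_cost Z zBS (S - {x}) ?p' ?f' < fq_cost Z zBS S par f"
    proof -
      have "fq_nodes Z zBS (S - {x}) - {zBS} = (V - {zBS}) - {x}"
        using 2(1) F unfolding FQST_def Let_def V_def fq_nodes_def by auto
      then have "fq_cost Z zBS (S - {x}) ?p' ?f' = edge_cost (V - {zBS}) ?p' ?f'"
        unfolding fq_cost_eq_edge_cost using basics(1) 2(3)
        by (simp add: edge_cost_remove_null)
      then show ?thesis using gain unfolding fq_cost_eq_edge_cost V_def by simp
    qed
    moreover have "card (S - {x}) \<le> card S" by (rule card_Diff1_le)
    ultimately show ?thesis by blast
  qed
qed

lemma MFQST_cost_le:
  assumes "MFQST_bound k Z zBS S par f \<or> (c > 0 \<and> MFQST_nw c Z zBS S par f)"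
    and "FQST Z zBS S' par' f'" and "card S' \<le> card S"
  shows "fq_cost Z zBS S par f \<le> fq_cost Z zBS S' par' f'"
  using assms(1)
proof
  assume "MFQST_bound k Z zBS S par f"
  then show ?thesis using assms(2,3) unfolding MFQST_bound_def by fastforce
next
  assume M: "c > 0 \<and> MFQST_nw c Z zBS S par f"
  then have "c * real (card S') \<le> c * real (card S)" using assms(3) by simp
  moreover have "fq_cost Z zBS S par f + c * real (card S) \<le> fq_cost Z zBS S' par' f' + c * real (card S')"
    using M assms(2) unfolding MFQST_nw_def by blast
  ultimately show ?thesis by linarith
qed

lemma vangle_ge_right_angle:
  assumes "a \<bullet> b \<le> 0"
  shows "vangle a b \<ge> pi / 2"
proof (cases "a = 0 \<or> b = 0")
  case False
  then have norms: "norm a * norm b > 0" by simp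
  have "\<bar>a \<bullet> b\<bar> \<le> norm a * norm b" by (rule Cauchy_Schwarz_ineq2)
  then have "-1 \<le> (a \<bullet> b) / (norm a * norm b)"
    using norms by (simp add: field_simps abs_le_iff)
  moreover have "(a \<bullet> b) / (norm a * norm b) \<le> 0"
    using assms norms by (simp add: divide_nonpos_pos)
  ultimately have "arccos 0 \<le> arccos ((a \<bullet> b) / (norm a * norm b))"
    by (intro arccos_le_arccos) auto
  then show ?thesis using False unfolding vangle_def by simp
qed (auto simp: vangle_def)

theorem mainTheorem11:
  fixes Z :: "pt set" and zBS :: pt and S :: "pt set"
    and par :: "pt \<Rightarrow> pt" and f :: "pt \<Rightarrow> real"
    and k :: nat and c :: real and x u y :: pt
  assumes "finite Z" and "Z \<noteq> {}" and "zBS \<notin> Z"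
    and "MFQST_bound k Z zBS S par f \<or> (c > 0 \<and> MFQST_nw c Z zBS S par f)"
    and "x \<in> fq_nodes Z zBS S" and "x \<noteq> zBS" and "y = par x"
    and "u \<in> fq_nodes Z zBS S - {zBS}" and "par u = x"
    and "u \<noteq> x" and "x \<noteq> y"
  shows "angle u x y \<ge> pi / 2"
proof -
  have F: "FQST Z zBS S par f"
    using assms(4) unfolding MFQST_bound_def MFQST_nw_def by auto
  have "(u - x) \<bullet> (y - x) \<le> 0"
  proof (rule ccontr)
    assume "\<not> (u - x) \<bullet> (y - x) \<le> 0"
    then obtain S' par' f' where "FQST Z zBS S' par' f'" "card S' \<le> card S"
        and "fq_cost Z zBS S' par' f' < fq_cost Z zBS S par f"
      using acute_angle_improvable[OF F assms(1,5,6,8,9)] assms(7) by auto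
    then show False using MFQST_cost_le[OF assms(4)] by fastforce
  qed
  then show ?thesis unfolding angle_def by (rule vangle_ge_right_angle)
qed

end
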